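(* Let $\boldsymbol\theta^*\in\mathbb{R}^d$ and let $(\mathbf a^{\langle t\rangle},\mathbf b^{\langle t\rangle},p^{\langle t\rangle})$ be generated by the iteration in the context. Then for all $t\ge0$, $$\operatorname{sgn}(\langle\mathbf a^{\langle t\rangle},\mathbf b^{\langle t\rangle}\rangle)=\operatorname{sgn}(\langle\mathbf a^{\langle t+1\rangle},\mathbf b^{\langle t+1\rangle}\rangle)=\operatorname{sgn}\big(\tfrac12-p^{\langle t+1\rangle}\big),\qquad \operatorname{sgn}(\langle\mathbf b^{\langle t\rangle},\boldsymbol\theta^*\rangle)=\operatorname{sgn}(\langle\mathbf b^{\langle t+1\rangle},\boldsymbol\theta^*\rangle).$$
   Context: $\operatorname{sgn}(0)=0$, $\operatorname{sgn}(z)=\pm1$ for $\pm z>0$. $\phi_d$ is the density of $N(\mathbf 0,I_d)$; $\mathbf Y\sim\tfrac12N(-\boldsymbol\theta^*,I_d)+\tfrac12N(\boldsymbol\theta^*,I_d)$; $w_d(\mathbf y,\boldsymbol\theta)=\frac{e^{\langle\mathbf y,\boldsymbol\theta\rangle}}{e^{\langle\mathbf y,\boldsymbol\theta\rangle}+e^{-\langle\mathbf y,\boldsymbol\theta\rangle}}$. Given $\mathbf a^{\langle0\rangle},\mathbf b^{\langle0\rangle}\in\mathbb{R}^d$, for $t\ge0$: $\mathbf q^{\langle t+1\rangle}=\mathbb{E}[w_d(\mathbf Y-\mathbf a^{\langle t\rangle},\mathbf b^{\langle t\rangle})\mathbf Y]$, $p^{\langle t+1\rangle}=\mathbb{E}[w_d(\mathbf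 Y-\mathbf a^{\langle t\rangle},\mathbf b^{\langle t\rangle})]$, $\mathbf a^{\langle t+1\rangle}=\frac{\mathbf q^{\langle t+1\rangle}(1-2p^{\langle t+1\rangle})}{2p^{\langle t+1\rangle}(1-p^{\langle t+1\rangle})}$, $\mathbf b^{\langle t+1\rangle}=\frac{\mathbf q^{\langle t+1\rangle}}{2p^{\langle t+1\rangle}(1-p^{\langle t+1\rangle})}$ (re-parameterized Population EM for a two-component Gaussian mixture with identity covariance). *)

theory Defs
  imports "HOL-Analysis.Analysis"
begin

definition std_gauss :: "'a::euclidean_space \<Rightarrow> real" where
  "std_gauss x = (2 * pi) powr (- real DIM('a) / 2) * exp (- (norm x)\<^sup>2 / 2)"

text \<open>Expectation of f(Y) for Y ~ 1/2 N(-th, I) + 1/2 N(th, I).\<close>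
definition mixE :: "'a::euclidean_space \<Rightarrow> ('a \<Rightarrow> 'b::{banach,second_countable_topology}) \<Rightarrow> 'b" where
  "mixE th f = (1/2) *\<^sub>R (\<integral>x. std_gauss (x + th) *\<^sub>R f x \<partial>lborel)
             + (1/2) *\<^sub>R (\<integral>x. std_gauss (x - th) *\<^sub>R f x \<partial>lborel)"

definition wd :: "'a::euclidean_space \<Rightarrow> 'a \<Rightarrow> real" where
  "wd y th = exp (y \<bullet> th) / (exp (y \<bullet> th) + exp (- (y \<bullet> th)))"

definition em_q :: "'a::euclidean_space \<Rightarrow> 'a \<Rightarrow> 'a \<Rightarrow> 'a" where
  "em_q th a b = mixE th (\<lambda>y. wd (y - a) b *\<^sub>R y)"

definition em_p :: "'a::euclidean_space \<Rightarrow> 'a \<Rightarrow> 'a \<Rightarrow> real" where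
  "em_p th a b = mixE th (\<lambda>y. wd (y - a) b)"

end

theory Submission
  imports Defs "HOL-Probability.Distributions"
begin

text \<open>
  All quantities are Gaussian integrals of the logistic function \<open>\<rho>(t) = e\<^sup>t / (e\<^sup>t + e\<^sup>-\<^sup>t)\<close> along the direction \<open>b\<close>.
  Write \<open>c = a \<bullet> b\<close> and \<open>s = \<theta> \<bullet> b\<close>. Pairing \<open>z\<close> with \<open>-z\<close> turns \<open>1/2 - p\<close> into
  an integral of differences \<open>\<rho>(x + c) - \<rho>(x - c)\<close>, so it has the sign of \<open>c\<close>.
  For every \<open>v\<close>, \<open>\<langle>q, v\<rangle> = E[(Z \<bullet> v) G(Z \<bullet> b)]/2 + (\<theta> \<bullet> v) E[\<rho>(Z \<bullet> b - c + s) - \<rho>(Z \<bullet> b - c - s)]/2\<close>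
  with \<open>G\<close> increasing, and the second expectation has the sign of \<open>s\<close>. For \<open>v = b\<close> the first
  term is positive when \<open>b \<noteq> 0\<close>, hence \<open>q \<noteq> 0\<close>; for \<open>v = \<theta>\<close> it is \<open>\<ge> 0\<close> when \<open>s \<ge> 0\<close> and
  \<open>\<le> 0\<close> when \<open>s \<le> 0\<close>, which follows by translating the Gaussian by \<open>t \<theta>\<close> and letting \<open>t \<rightarrow> 0\<close>.
  The update rescales \<open>q\<close> by \<open>1 / (2p(1 - p)) > 0\<close>, and \<open>a\<close> carries the extra factor \<open>1 - 2p\<close>.
\<close>

section \<open>The logistic function\<close>

definition logistic :: "real \<Rightarrow> real" where
  "logistic t = exp t / (exp t + exp (- t))"

lemma wd_eq_logistic: "wd y \<theta> = logistic (y \<bullet> \<theta>)"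
  unfolding wd_def logistic_def ..

lemma logistic_eq: "logistic t = 1 / (1 + exp (- 2 * t))"
proof -
  have "exp t + exp (- t) = exp t * (1 + exp (- 2 * t))"
    by (simp add: distrib_left exp_add[symmetric])
  then show ?thesis unfolding logistic_def by simp
qed

lemma logistic_pos: "0 < logistic t"
  unfolding logistic_def by (simp add: add_pos_pos)

lemma logistic_less_one: "logistic t < 1"
  unfolding logistic_def by (simp add: add_pos_pos)

lemma logistic_minus: "logistic (- t) = 1 - logistic t"
proof -
  have "exp t + exp (- t) > 0" by (simp add: add_pos_pos)
  then show ?thesis unfolding logistic_def by (simp add: field_simps)
qed

lemma abs_logistic_le: "\<bar>logistic t\<bar> \<le> 1"
  using logistic_pos[of t] logistic_less_one[of t] by simp

lemma strict_mono_logistic: "strict_mono logistic"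
proof (rule strict_monoI)
  fix t t' :: real assume "t < t'"
  then have "exp (- 2 * t') < exp (- 2 * t)" by simp
  then show "logistic t < logistic t'" unfolding logistic_eq by (simp add: frac_less2 add_pos_pos)
qed

lemma logistic_less_iff [simp]: "logistic t < logistic t' \<longleftrightarrow> t < t'"
  by (rule strict_mono_less[OF strict_mono_logistic])

lemma continuous_on_logistic [continuous_intros]:
  assumes "continuous_on S f"
  shows "continuous_on S (\<lambda>x. logistic (f x))"
proof -
  have "exp t + exp (- t) \<noteq> 0" for t :: real
    by (metis add_pos_pos exp_gt_zero less_irrefl)
  then show ?thesis
    unfolding logistic_def using assms by (intro continuous_intros) auto
qed

lemma sgn_logistic_diff: "sgn (logistic (x + c) - logistic (x - c)) = sgn c"
  by (cases c "0::real" rule: linorder_cases) auto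

section \<open>Integrals against the standard Gaussian\<close>

definition iso_normal_density :: "real \<Rightarrow> 'a::euclidean_space \<Rightarrow> real" where
  "iso_normal_density \<sigma> x = (\<Prod>j\<in>Basis. normal_density 0 \<sigma> (x \<bullet> j))"

lemma iso_normal_density_eq:
  "iso_normal_density \<sigma> (x::'a::euclidean_space)
     = (1 / sqrt (2 * pi * \<sigma>\<^sup>2)) ^ DIM('a) * exp (- (norm x)\<^sup>2 / (2 * \<sigma>\<^sup>2))"
proof -
  have norm_sq: "(norm x)\<^sup>2 = (\<Sum>j\<in>Basis. (x \<bullet> j)\<^sup>2)"
    unfolding power2_norm_eq_inner euclidean_inner[of x x] by (simp add: power2_eq_square)
  have "iso_normal_density \<sigma> x
      = (\<Prod>j\<in>Basis. 1 / sqrt (2 * pi * \<sigma>\<^sup>2) * exp (- (x \<bullet> j)\<^sup>2 / (2 * \<sigma>\<^sup>2)))"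
    unfolding iso_normal_density_def normal_density_def by simp
  also have "\<dots> = (1 / sqrt (2 * pi * \<sigma>\<^sup>2)) ^ DIM('a) * exp (\<Sum>j\<in>Basis. - (x \<bullet> j)\<^sup>2 / (2 * \<sigma>\<^sup>2))"
    by (simp only: prod.distrib prod_constant exp_sum finite_Basis)
  also have "(\<Sum>j\<in>Basis. - (x \<bullet> j)\<^sup>2 / (2 * \<sigma>\<^sup>2)) = - (norm x)\<^sup>2 / (2 * \<sigma>\<^sup>2)"
    using norm_sq by (simp add: sum_divide_distrib[symmetric] sum_negf)
  finally show ?thesis .
qed

lemma
  assumes "0 < \<sigma>"
  shows integrable_iso_normal_density: "integrable lborel (iso_normal_density \<sigma> :: 'a::euclidean_space \<Rightarrow> real)"
    and integral_iso_normal_density: "integral\<^sup>L lborel (iso_normal_density \<sigma> :: 'a \<Rightarrow> real) = 1"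
proof -
  have "(\<integral>\<^sup>+x. iso_normal_density \<sigma> (x::'a) \<partial>lborel)
      = (\<integral>\<^sup>+x. (\<Prod>j\<in>Basis. ennreal (normal_density 0 \<sigma> ((x::'a) \<bullet> j))) \<partial>lborel)"
    unfolding iso_normal_density_def by (simp add: prod_ennreal)
  also have "\<dots> = (\<Prod>j\<in>(Basis::'a set). \<integral>\<^sup>+x. normal_density 0 \<sigma> x \<partial>lborel)"
    by (rule nn_integral_lborel_prod) auto
  also have "(\<integral>\<^sup>+x. normal_density 0 \<sigma> x \<partial>lborel) = 1"
    using assms by (subst nn_integral_eq_integral) (auto intro: integrable_normal_density)
  finally have "(\<integral>\<^sup>+x. iso_normal_density \<sigma> (x::'a) \<partial>lborel) = ennreal 1" by simp
  moreover have "iso_normal_density \<sigma> \<in> borel_measurable (lborel :: 'a measure)"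
    unfolding iso_normal_density_def by measurable
  moreover have "AE x in lborel. 0 \<le> iso_normal_density \<sigma> (x::'a)"
    unfolding iso_normal_density_def by (simp add: prod_nonneg)
  ultimately have "integrable lborel (iso_normal_density \<sigma> :: 'a \<Rightarrow> real)
      \<and> integral\<^sup>L lborel (iso_normal_density \<sigma> :: 'a \<Rightarrow> real) = 1"
    using nn_integral_eq_integrable[OF _ _ zero_le_one] by blast
  then show "integrable lborel (iso_normal_density \<sigma> :: 'a \<Rightarrow> real)"
    and "integral\<^sup>L lborel (iso_normal_density \<sigma> :: 'a \<Rightarrow> real) = 1"
    by blast+
qed

lemma std_gauss_eq_iso_normal_density: "std_gauss = (iso_normal_density 1 :: 'a::euclidean_space \<Rightarrow> real)"
proof
  fix x :: 'a
  have "(1 / sqrt (2 * pi)) ^ DIM('a) = ((2 * pi) powr (- (1/2))) ^ DIM('a)"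
    by (simp add: powr_minus_divide powr_half_sqrt)
  also have "\<dots> = (2 * pi) powr (real DIM('a) * (- (1/2)))"
    by (subst powr_power) auto
  finally show "std_gauss x = iso_normal_density 1 x"
    unfolding std_gauss_def iso_normal_density_eq by simp
qed

lemma integrable_std_gauss: "integrable lborel (std_gauss :: 'a::euclidean_space \<Rightarrow> real)"
  unfolding std_gauss_eq_iso_normal_density by (rule integrable_iso_normal_density) simp

lemma integral_std_gauss: "integral\<^sup>L lborel (std_gauss :: 'a::euclidean_space \<Rightarrow> real) = 1"
  unfolding std_gauss_eq_iso_normal_density by (rule integral_iso_normal_density) simp

lemma std_gauss_pos: "0 < std_gauss x"
  unfolding std_gauss_def by simp

lemma std_gauss_minus: "std_gauss (- x) = std_gauss x"
  unfolding std_gauss_def by simp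

lemma std_gauss_add: "std_gauss (z + v) = std_gauss z * exp (- (z \<bullet> v) - (v \<bullet> v) / 2)"
proof -
  have "- (norm (z + v))\<^sup>2 / 2 = - (norm z)\<^sup>2 / 2 + (- (z \<bullet> v) - (v \<bullet> v) / 2)"
    by (simp add: power2_norm_eq_inner inner_add_left inner_add_right inner_commute)
  then show ?thesis unfolding std_gauss_def by (simp only: exp_add mult.assoc)
qed

lemma continuous_on_std_gauss [continuous_intros]:
  "continuous_on S f \<Longrightarrow> continuous_on S (\<lambda>x. std_gauss (f x))"
  unfolding std_gauss_def by (intro continuous_intros) auto

lemma borel_measurable_std_gauss [measurable]:
  "std_gauss \<in> borel_measurable (borel :: 'a::euclidean_space measure)"
  by (intro borel_measurable_continuous_onI continuous_intros)

lemma std_gauss_mult_norm_le: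
  "std_gauss (z::'a::euclidean_space) * norm z \<le> sqrt 2 ^ DIM('a) * iso_normal_density (sqrt 2) z"
proof -
  have "norm z \<le> 1 + (norm z)\<^sup>2 / 4"
    using sum_power2_ge_zero[of "norm z / 2 - 1" 0] by (simp add: power2_eq_square field_simps)
  also have "\<dots> \<le> exp ((norm z)\<^sup>2 / 4)" by (rule exp_ge_add_one_self_aux) simp
  finally have "std_gauss z * norm z \<le> std_gauss z * exp ((norm z)\<^sup>2 / 4)"
    using std_gauss_pos by (intro mult_left_mono) (auto intro: less_imp_le)
  also have "\<dots> = (1 / sqrt (2 * pi)) ^ DIM('a) * exp (- (norm z)\<^sup>2 / 4)"
    unfolding std_gauss_eq_iso_normal_density iso_normal_density_eq
    by (simp add: mult.assoc exp_add[symmetric])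
  also have "\<dots> = sqrt 2 ^ DIM('a) * iso_normal_density (sqrt 2) z"
  proof -
    have "1 / (sqrt 2 * sqrt pi) = sqrt 2 / (2 * sqrt pi)"
      by (simp add: field_simps)
    then show ?thesis
      unfolding iso_normal_density_eq by (simp add: power_mult_distrib[symmetric] real_sqrt_mult)
  qed
  finally show ?thesis .
qed

lemma std_gauss_tilt_le:
  "std_gauss z * (1 - t * (z \<bullet> v)) \<le> exp (t\<^sup>2 * (v \<bullet> v) / 2) * std_gauss (z + t *\<^sub>R v)"
proof -
  have "exp (t\<^sup>2 * (v \<bullet> v) / 2) * std_gauss (z + t *\<^sub>R v) = std_gauss z * exp (- (t * (z \<bullet> v)))"
    unfolding std_gauss_add by (simp add: power2_eq_square algebra_simps flip: exp_add)
  moreover have "1 - t * (z \<bullet> v) \<le> exp (- (t * (z \<bullet> v)))"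
    using exp_ge_add_one_self[of "- (t * (z \<bullet> v))"] by simp
  ultimately show ?thesis
    using std_gauss_pos[of z] by simp
qed

lemma lborel_integral_translate:
  fixes h :: "'a::euclidean_space \<Rightarrow> 'b::{banach,second_countable_topology}"
  assumes [measurable]: "h \<in> borel_measurable borel"
  shows "(\<integral>x. h x \<partial>lborel) = (\<integral>x. h (x + c) \<partial>lborel)"
proof -
  have "(\<integral>x. h x \<partial>distr lborel borel ((+) c)) = (\<integral>x. h (c + x) \<partial>lborel)"
    by (rule integral_distr) auto
  then show ?thesis by (simp add: lborel_distr_plus add.commute)
qed

lemma lborel_integrable_translate_iff:
  fixes h :: "'a::euclidean_space \<Rightarrow> 'b::{banach,second_countable_topology}"
  assumes [measurable]: "h \<in> borel_measurable borel"
  shows "integrable lborel (\<lambda>x. h (x + c)) \<longleftrightarrow> integrable lborel h"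
proof -
  have "integrable (distr lborel borel ((+) c)) h \<longleftrightarrow> integrable lborel (\<lambda>x. h (c + x))"
    by (rule integrable_distr_eq) auto
  then show ?thesis by (simp add: lborel_distr_plus add.commute)
qed

lemma lborel_integral_reflect:
  fixes h :: "'a::euclidean_space \<Rightarrow> 'b::{banach,second_countable_topology}"
  assumes [measurable]: "h \<in> borel_measurable borel"
  shows "(\<integral>x. h x \<partial>lborel) = (\<integral>x. h (- x) \<partial>lborel)"
proof -
  have "distr lborel borel uminus = (lborel :: 'a measure)"
    using lborel_affine[of "-1::real" "0::'a"] by (simp add: density_1)
  moreover have "(\<integral>x. h x \<partial>distr lborel borel uminus) = (\<integral>x. h (- x) \<partial>lborel)"
    by (rule integral_distr) auto
  ultimately show ?thesis by simp
qed

lemma integral_pos_of_continuous: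
  fixes f :: "'a::euclidean_space \<Rightarrow> real"
  assumes "continuous_on UNIV f" "integrable lborel f" "\<And>x. 0 \<le> f x" "0 < f x\<^sub>0"
  shows "0 < integral\<^sup>L lborel f"
proof -
  have "integral\<^sup>L lborel f \<noteq> 0"
  proof
    assume "integral\<^sup>L lborel f = 0"
    then have "AE x in lebesgue. x \<in> {x. f x = 0}"
      using integral_nonneg_eq_0_iff_AE[OF assms(2)] assms(3) by (auto intro: AE_completion)
    moreover have "closed {x. f x = 0}"
      using continuous_closed_preimage_constant[OF assms(1) closed_UNIV] by simp
    ultimately have "f x\<^sub>0 = 0"
      using mem_closed_if_AE_lebesgue by blast
    with assms(4) show False by simp
  qed
  moreover have "0 \<le> integral\<^sup>L lborel f" by (simp add: assms(3))
  ultimately show ?thesis by simp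
qed

lemma integrable_std_gauss_scaleR:
  fixes h :: "'a::euclidean_space \<Rightarrow> 'b::{banach,second_countable_topology}"
  assumes h: "continuous_on UNIV h" and bound: "\<And>z. norm (h z) \<le> A + B * norm z"
  shows "integrable lborel (\<lambda>z. std_gauss z *\<^sub>R h z)"
proof (rule Bochner_Integration.integrable_bound)
  show "integrable lborel (\<lambda>z::'a. \<bar>A\<bar> * std_gauss z
      + \<bar>B\<bar> * (sqrt 2 ^ DIM('a) * iso_normal_density (sqrt 2) z))"
    by (intro Bochner_Integration.integrable_add Bochner_Integration.integrable_mult_right
        integrable_std_gauss integrable_iso_normal_density) simp
  show "(\<lambda>z. std_gauss z *\<^sub>R h z) \<in> borel_measurable lborel"
    using borel_measurable_continuous_onI[OF h] by measurable
  show "AE z in lborel. norm (std_gauss z *\<^sub>R h z) \<le> norm (\<bar>A\<bar> * std_gauss z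
      + \<bar>B\<bar> * (sqrt 2 ^ DIM('a) * iso_normal_density (sqrt 2) z))"
  proof (intro AE_I2)
    fix z :: 'a
    have g: "0 < std_gauss z" by (rule std_gauss_pos)
    have "norm (std_gauss z *\<^sub>R h z) \<le> std_gauss z * (\<bar>A\<bar> + \<bar>B\<bar> * norm z)"
      using g bound[of z] by (auto intro!: mult_left_mono order_trans[OF _ add_mono]
          simp: abs_mult_pos mult_right_mono)
    also have "\<dots> \<le> \<bar>A\<bar> * std_gauss z + \<bar>B\<bar> * (sqrt 2 ^ DIM('a) * iso_normal_density (sqrt 2) z)"
      using mult_left_mono[OF std_gauss_mult_norm_le[of z], of "\<bar>B\<bar>"]
      by (simp add: algebra_simps)
    also have "\<dots> \<le> norm (\<bar>A\<bar> * std_gauss z + \<bar>B\<bar> * (sqrt 2 ^ DIM('a) * iso_normal_density (sqrt 2) z))"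
      by simp
    finally show "norm (std_gauss z *\<^sub>R h z) \<le> \<dots>" .
  qed
qed

lemma integrable_std_gauss_mult:
  fixes f :: "'a::euclidean_space \<Rightarrow> real"
  assumes "continuous_on UNIV f" and "\<And>z. \<bar>f z\<bar> \<le> A + B * norm z"
  shows "integrable lborel (\<lambda>z. std_gauss z * f z)"
  using integrable_std_gauss_scaleR[of f A B] assms by simp

lemma linear_bound_translate:
  fixes h :: "'a::real_normed_vector \<Rightarrow> 'b::real_normed_vector"
  assumes "\<And>z. norm (h z) \<le> A + B * norm z"
  shows "norm (h (z + v)) \<le> (\<bar>A\<bar> + \<bar>B\<bar> * norm v) + \<bar>B\<bar> * norm z"
proof -
  have "norm (h (z + v)) \<le> \<bar>A\<bar> + \<bar>B\<bar> * norm (z + v)"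
    using assms[of "z + v"] mult_right_mono[OF abs_ge_self[of B] norm_ge_zero[of "z + v"]]
      abs_ge_self[of A] by linarith
  also have "\<dots> \<le> \<bar>A\<bar> + \<bar>B\<bar> * (norm z + norm v)"
    using norm_triangle_ineq[of z v] by (simp add: mult_left_mono)
  finally show ?thesis by (simp add: algebra_simps)
qed

lemma abs_inner_mult_le:
  assumes "\<bar>y\<bar> \<le> M"
  shows "\<bar>(z \<bullet> v) * y\<bar> \<le> (norm v * M) * norm z"
proof -
  have "\<bar>(z \<bullet> v) * y\<bar> \<le> (norm z * norm v) * M"
    unfolding abs_mult using Cauchy_Schwarz_ineq2[of z v] assms by (intro mult_mono) auto
  then show ?thesis by (simp add: ac_simps)
qed

lemma integrable_std_gauss_translate_scaleR:
  fixes h :: "'a::euclidean_space \<Rightarrow> 'b::{banach,second_countable_topology}"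
  assumes h: "continuous_on UNIV h" and bound: "\<And>z. norm (h z) \<le> A + B * norm z"
  shows "integrable lborel (\<lambda>x. std_gauss (x + v) *\<^sub>R h x)"
proof -
  have "integrable lborel (\<lambda>z. std_gauss z *\<^sub>R h (z + - v))"
  proof (rule integrable_std_gauss_scaleR)
    show "continuous_on UNIV (\<lambda>z. h (z + - v))"
      by (rule continuous_on_compose2[OF h]) (auto intro!: continuous_intros)
    show "norm (h (z + - v)) \<le> (\<bar>A\<bar> + \<bar>B\<bar> * norm (- v)) + \<bar>B\<bar> * norm z" for z
      using bound by (rule linear_bound_translate)
  qed
  then show ?thesis
    using borel_measurable_continuous_onI[OF h]
    by (subst lborel_integrable_translate_iff[symmetric, where c = "- v"]) simp_all
qed

lemma integral_std_gauss_symmetrize: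
  fixes f :: "'a::euclidean_space \<Rightarrow> real"
  assumes f: "continuous_on UNIV f" and bound: "\<And>z. \<bar>f z\<bar> \<le> A + B * norm z"
  shows "(\<integral>z. std_gauss z * f z \<partial>lborel) = (\<integral>z. std_gauss z * ((f z + f (- z)) / 2) \<partial>lborel)"
proof -
  have f_minus: "continuous_on UNIV (\<lambda>z. f (- z))"
    by (rule continuous_on_compose2[OF f]) (auto intro!: continuous_intros)
  have "\<bar>f (- z)\<bar> \<le> A + B * norm z" for z
    using bound[of "- z"] by simp
  then have int: "integrable lborel (\<lambda>z. std_gauss z * f z)"
    "integrable lborel (\<lambda>z. std_gauss z * f (- z))"
    by (auto intro!: integrable_std_gauss_mult[OF f bound] integrable_std_gauss_mult[OF f_minus])
  have "(\<integral>z. std_gauss z * f z \<partial>lborel) = (\<integral>z. std_gauss z * f (- z) \<partial>lborel)"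
    using lborel_integral_reflect[of "\<lambda>z. std_gauss z * f z"] borel_measurable_continuous_onI[OF f]
    by (simp add: std_gauss_minus)
  moreover have "(\<lambda>z. std_gauss z * ((f z + f (- z)) / 2))
      = (\<lambda>z. (std_gauss z * f z + std_gauss z * f (- z)) / 2)"
    by (simp add: fun_eq_iff algebra_simps)
  ultimately show ?thesis using int by simp
qed

lemma mixE_eq_integral:
  fixes f :: "'a::euclidean_space \<Rightarrow> real"
  assumes f: "continuous_on UNIV f" and bound: "\<And>y. \<bar>f y\<bar> \<le> A + B * norm y"
  shows "mixE \<theta> f = (\<integral>z. std_gauss z * ((f (z - \<theta>) + f (z + \<theta>)) / 2) \<partial>lborel)"
proof -
  have [measurable]: "f \<in> borel_measurable borel"
    using f by (rule borel_measurable_continuous_onI)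
  have int: "integrable lborel (\<lambda>z. std_gauss z * f (z + v))" for v
  proof (rule integrable_std_gauss_mult)
    show "continuous_on UNIV (\<lambda>z. f (z + v))"
      by (rule continuous_on_compose2[OF f]) (auto intro!: continuous_intros)
    show "\<bar>f (z + v)\<bar> \<le> (\<bar>A\<bar> + \<bar>B\<bar> * norm v) + \<bar>B\<bar> * norm z" for z
      using linear_bound_translate[of f A B z v] bound by simp
  qed
  have "(\<integral>x. std_gauss (x + \<theta>) * f x \<partial>lborel) = (\<integral>z. std_gauss z * f (z - \<theta>) \<partial>lborel)"
    using lborel_integral_translate[of "\<lambda>x. std_gauss (x + \<theta>) * f x" "- \<theta>"] by simp
  moreover have "(\<integral>x. std_gauss (x - \<theta>) * f x \<partial>lborel) = (\<integral>z. std_gauss z * f (z + \<theta>) \<partial>lborel)"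
    using lborel_integral_translate[of "\<lambda>x. std_gauss (x - \<theta>) * f x" \<theta>] by simp
  moreover have "(\<lambda>z. std_gauss z * ((f (z - \<theta>) + f (z + \<theta>)) / 2))
      = (\<lambda>z. (std_gauss z * f (z + - \<theta>) + std_gauss z * f (z + \<theta>)) / 2)"
    by (simp add: fun_eq_iff algebra_simps)
  ultimately show ?thesis
    using int[of "- \<theta>"] int[of \<theta>] unfolding mixE_def by simp
qed

lemma integral_std_gauss_const_diff:
  fixes f :: "'a::euclidean_space \<Rightarrow> real"
  assumes "integrable lborel (\<lambda>z. std_gauss z * f z)"
  shows "(\<integral>z. std_gauss z * (k - f z) \<partial>lborel) = k - (\<integral>z. std_gauss z * f z \<partial>lborel)"
proof -
  have "(\<integral>z. std_gauss z * (k - f z) \<partial>lborel) = (\<integral>z. k * std_gauss z - std_gauss z * f z \<partial>lborel)"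
    by (simp add: algebra_simps)
  also have "\<dots> = k * integral\<^sup>L lborel (std_gauss :: 'a \<Rightarrow> real) - (\<integral>z. std_gauss z * f z \<partial>lborel)"
    by (subst Bochner_Integration.integral_diff
        [OF Bochner_Integration.integrable_mult_right[OF integrable_std_gauss] assms]) simp
  finally show ?thesis by (simp add: integral_std_gauss)
qed

lemma sgn_integral_std_gauss:
  fixes f :: "'a::euclidean_space \<Rightarrow> real"
  assumes f: "continuous_on UNIV f" and bound: "\<And>z. \<bar>f z\<bar> \<le> A + B * norm z"
    and sgn_f: "\<And>z. sgn (f z) = sgn r"
  shows "sgn (\<integral>z. std_gauss z * f z \<partial>lborel) = sgn r"
proof -
  have int: "integrable lborel (\<lambda>z. std_gauss z * f z)"
    using f bound by (rule integrable_std_gauss_mult)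
  have cont: "continuous_on UNIV (\<lambda>z. std_gauss z * f z)"
    using f by (intro continuous_intros)
  consider "0 < r" | "r < 0" | "r = 0" by linarith
  then show ?thesis
  proof cases
    case 1
    then have "0 < f z" for z using sgn_f[of z] by (auto simp: sgn_if split: if_splits)
    then have "0 < (\<integral>z. std_gauss z * f z \<partial>lborel)"
      by (intro integral_pos_of_continuous[OF cont int, of 0]) (auto simp: std_gauss_pos less_imp_le)
    with 1 show ?thesis by simp
  next
    case 2
    then have "f z < 0" for z using sgn_f[of z] by (auto simp: sgn_if split: if_splits)
    then have "0 < (\<integral>z. - (std_gauss z * f z) \<partial>lborel)"
      using cont int
      by (intro integral_pos_of_continuous[of _ 0])
        (auto intro!: continuous_intros simp: std_gauss_pos mult_pos_neg less_imp_le)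
    with 2 show ?thesis by simp
  next
    case 3
    then have "f z = 0" for z using sgn_f[of z] by (simp add: sgn_0_0)
    with 3 show ?thesis by simp
  qed
qed

lemma integral_inner_strict_mono_pos:
  fixes b :: "'a::euclidean_space"
  assumes G: "continuous_on UNIV G" and mono: "strict_mono G" and bound: "\<And>x. \<bar>G x\<bar> \<le> M"
    and "b \<noteq> 0"
  shows "0 < (\<integral>z. std_gauss z * ((z \<bullet> b) * G (z \<bullet> b)) \<partial>lborel)"
proof -
  define F where "F z = (z \<bullet> b) * G (z \<bullet> b)" for z :: 'a
  have F_cont: "continuous_on UNIV F"
    unfolding F_def by (intro continuous_intros continuous_on_compose2[OF G]) auto
  have F_bound: "\<bar>F z\<bar> \<le> 0 + (norm b * M) * norm z" for z
    unfolding F_def using abs_inner_mult_le[OF bound] by simp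
  have F_sym: "(F z + F (- z)) / 2 = (z \<bullet> b) * (G (z \<bullet> b) - G (- (z \<bullet> b))) / 2" for z
    unfolding F_def by (simp add: algebra_simps)
  have "0 \<le> x * (G x - G (- x))" for x
    using strict_mono_less_eq[OF mono, of x "- x"] strict_mono_less_eq[OF mono, of "- x" x]
    by (cases "0 \<le> x") (auto intro: mult_nonpos_nonpos)
  then have nonneg: "0 \<le> std_gauss z * ((F z + F (- z)) / 2)" for z
    unfolding F_sym using std_gauss_pos[of z] by simp
  have "0 < b \<bullet> b" using \<open>b \<noteq> 0\<close> by simp
  then have pos: "0 < std_gauss b * ((F b + F (- b)) / 2)"
    unfolding F_sym using strict_monoD[OF mono, of "- (b \<bullet> b)" "b \<bullet> b"] std_gauss_pos[of b] by simp
  have "(\<integral>z. std_gauss z * F z \<partial>lborel) = (\<integral>z. std_gauss z * ((F z + F (- z)) / 2) \<partial>lborel)"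
    using F_cont F_bound by (rule integral_std_gauss_symmetrize)
  also have "\<dots> > 0"
  proof (rule integral_pos_of_continuous[where x\<^sub>0 = b])
    have cont: "continuous_on UNIV (\<lambda>z. (F z + F (- z)) / 2)"
      by (intro continuous_intros F_cont continuous_on_compose2[OF F_cont]) auto
    then show "continuous_on UNIV (\<lambda>z. std_gauss z * ((F z + F (- z)) / 2))"
      by (rule continuous_on_mult[rotated]) (intro continuous_intros)
    have "\<bar>(F z + F (- z)) / 2\<bar> \<le> 0 + (norm b * M) * norm z" for z
      using F_bound[of z] F_bound[of "- z"] by simp
    with cont show "integrable lborel (\<lambda>z. std_gauss z * ((F z + F (- z)) / 2))"
      by (rule integrable_std_gauss_mult)
  qed (use nonneg pos in auto)
  finally show ?thesis unfolding F_def .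
qed

lemma integral_std_gauss_translate_ridge:
  fixes b w :: "'a::euclidean_space"
  assumes "continuous_on UNIV G"
  shows "(\<integral>z. std_gauss (z + w) * G (z \<bullet> b) \<partial>lborel) = (\<integral>z. std_gauss z * G (z \<bullet> b - w \<bullet> b) \<partial>lborel)"
proof -
  have [measurable]: "(\<lambda>z::'a. G (z \<bullet> b)) \<in> borel_measurable borel"
    by (intro borel_measurable_continuous_onI continuous_on_compose2[OF assms])
      (auto intro!: continuous_intros)
  show ?thesis
    using lborel_integral_translate[of "\<lambda>z. std_gauss (z + w) * G (z \<bullet> b)" "- w"]
    by (simp add: inner_diff_left)
qed

lemma integral_tilt_le:
  fixes \<theta> b :: "'a::euclidean_space"
  assumes G: "continuous_on UNIV G" "mono G" "\<And>x. 0 \<le> G x" "\<And>x. G x \<le> M"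
    and "0 \<le> b \<bullet> \<theta>" and "0 < t"
  shows "(\<integral>z. std_gauss z * G (z \<bullet> b) \<partial>lborel) - t * (\<integral>z. std_gauss z * ((z \<bullet> \<theta>) * G (z \<bullet> b)) \<partial>lborel)
    \<le> exp (t\<^sup>2 * (\<theta> \<bullet> \<theta>) / 2) * (\<integral>z. std_gauss z * G (z \<bullet> b) \<partial>lborel)"
proof -
  define E where "E = exp (t\<^sup>2 * (\<theta> \<bullet> \<theta>) / 2)"
  have G_cont: "continuous_on UNIV (\<lambda>z::'a. G (z \<bullet> b - r))" for r
    by (rule continuous_on_compose2[OF G(1)]) (auto intro!: continuous_intros)
  have G_bound: "\<bar>G x\<bar> \<le> M + 0 * norm z" for x and z :: 'a
    using G(3,4)[of x] by simp
  have G_int: "integrable lborel (\<lambda>z::'a. std_gauss z * G (z \<bullet> b - r))" for r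
    using G_cont G_bound by (rule integrable_std_gauss_mult)
  have T_int: "integrable lborel (\<lambda>z::'a. std_gauss z * ((z \<bullet> \<theta>) * G (z \<bullet> b)))"
    using G_cont[of 0] abs_inner_mult_le[OF G_bound[THEN order_trans]]
    by (intro integrable_std_gauss_mult[where A = 0 and B = "norm \<theta> * M"])
      (auto intro!: continuous_intros)
  have shift_int: "integrable lborel (\<lambda>z. std_gauss (z + t *\<^sub>R \<theta>) * G (z \<bullet> b))"
    using integrable_std_gauss_translate_scaleR[OF G_cont[of 0], of M 0] G_bound by simp
  have "(\<integral>z. std_gauss z * G (z \<bullet> b) \<partial>lborel) - t * (\<integral>z. std_gauss z * ((z \<bullet> \<theta>) * G (z \<bullet> b)) \<partial>lborel)
      = (\<integral>z. std_gauss z * G (z \<bullet> b) - t * (std_gauss z * ((z \<bullet> \<theta>) * G (z \<bullet> b))) \<partial>lborel)"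
    using G_int[of 0] T_int by simp
  also have "\<dots> \<le> (\<integral>z. E * (std_gauss (z + t *\<^sub>R \<theta>) * G (z \<bullet> b)) \<partial>lborel)"
  proof (rule integral_mono)
    show "integrable lborel (\<lambda>z. std_gauss z * G (z \<bullet> b) - t * (std_gauss z * ((z \<bullet> \<theta>) * G (z \<bullet> b))))"
      using G_int[of 0] T_int by simp
    show "integrable lborel (\<lambda>z. E * (std_gauss (z + t *\<^sub>R \<theta>) * G (z \<bullet> b)))"
      using shift_int by simp
    show "std_gauss z * G (z \<bullet> b) - t * (std_gauss z * ((z \<bullet> \<theta>) * G (z \<bullet> b)))
        \<le> E * (std_gauss (z + t *\<^sub>R \<theta>) * G (z \<bullet> b))" for z
      using mult_right_mono[OF std_gauss_tilt_le[of z t \<theta>] G(3)[of "z \<bullet> b"]]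
      by (simp add: E_def algebra_simps)
  qed
  also have "\<dots> = E * (\<integral>z. std_gauss z * G (z \<bullet> b - t * (\<theta> \<bullet> b)) \<partial>lborel)"
    using integral_std_gauss_translate_ridge[OF G(1), of "t *\<^sub>R \<theta>" b] by simp
  also have "\<dots> \<le> E * (\<integral>z. std_gauss z * G (z \<bullet> b) \<partial>lborel)"
    using G_int[of 0] G_int \<open>0 \<le> b \<bullet> \<theta>\<close> \<open>0 < t\<close>
    by (intro mult_left_mono integral_mono)
      (auto intro!: mult_left_mono monoD[OF G(2)] simp: E_def std_gauss_pos less_imp_le inner_commute)
  finally show ?thesis unfolding E_def .
qed

text \<open>For \<open>b \<noteq> 0\<close> this is \<open>E[(Z \<bullet> \<theta>) G(Z \<bullet> b)] = (b \<bullet> \<theta>) / |b|\<^sup>2 * E[(Z \<bullet> b) G(Z \<bullet> b)]\<close>;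
  conditioning on \<open>Z \<bullet> b\<close> is avoided by letting \<open>t \<rightarrow> 0\<close> in \<open>integral_tilt_le\<close>.\<close>
lemma integral_inner_mono_nonneg:
  fixes \<theta> b :: "'a::euclidean_space"
  assumes G: "continuous_on UNIV G" "mono G" "\<And>x. 0 \<le> G x" "\<And>x. G x \<le> M"
    and "0 \<le> b \<bullet> \<theta>"
  shows "0 \<le> (\<integral>z. std_gauss z * ((z \<bullet> \<theta>) * G (z \<bullet> b)) \<partial>lborel)"
proof -
  define F0 where "F0 = (\<integral>z. std_gauss z * G (z \<bullet> b) \<partial>lborel)"
  define T where "T = (\<integral>z. std_gauss z * ((z \<bullet> \<theta>) * G (z \<bullet> b)) \<partial>lborel)"
  define k where "k = \<theta> \<bullet> \<theta>"
  define C where "C = k / 2 * exp (k / 2) * F0"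
  have "0 \<le> F0" unfolding F0_def
    using G(3) std_gauss_pos[THEN less_imp_le] by (intro integral_nonneg_AE AE_I2 mult_nonneg_nonneg)
  have "- (C * t) \<le> T" if t: "0 < t" "t \<le> 1" for t
  proof -
    have "exp (t\<^sup>2 * k / 2) - 1 \<le> t\<^sup>2 * k / 2 * exp (t\<^sup>2 * k / 2)"
      using exp_ge_add_one_self[of "- (t\<^sup>2 * k / 2)"] mult_right_mono[of _ _ "exp (t\<^sup>2 * k / 2)"]
      by (simp add: exp_minus field_simps)
    also have "\<dots> \<le> t\<^sup>2 * (k / 2 * exp (k / 2))"
    proof -
      have "0 \<le> k" unfolding k_def by simp
      moreover have "t\<^sup>2 \<le> 1" using t by (simp add: power_le_one)
      ultimately have "exp (t\<^sup>2 * k / 2) \<le> exp (k / 2)" by (simp add: mult_left_le_one_le)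
      then have "t\<^sup>2 * (k / 2) * exp (t\<^sup>2 * k / 2) \<le> t\<^sup>2 * (k / 2) * exp (k / 2)"
        using \<open>0 \<le> k\<close> by (intro mult_left_mono) auto
      then show ?thesis by (simp add: ac_simps)
    qed
    finally have "(exp (t\<^sup>2 * k / 2) - 1) * F0 \<le> t * (C * t)"
      unfolding C_def using \<open>0 \<le> F0\<close>
      by (auto dest: mult_right_mono[of _ _ F0] simp: power2_eq_square ac_simps)
    moreover have "F0 - t * T \<le> exp (t\<^sup>2 * k / 2) * F0"
      unfolding F0_def T_def k_def using G assms(5) t(1) by (rule integral_tilt_le)
    ultimately have "t * (- (C * t)) \<le> t * T"
      by (simp add: algebra_simps)
    with t(1) show ?thesis by (simp only: mult_le_cancel_left_pos)
  qed
  then have "\<forall>\<^sub>F t in at_right 0. - (C * t) \<le> T"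
    using eventually_at_right_real[of 0 1] by (auto elim: eventually_mono)
  moreover have "((\<lambda>t. - (C * t)) \<longlongrightarrow> 0) (at_right 0)"
    by (intro tendsto_eq_intros) auto
  ultimately have "0 \<le> T"
    by (intro tendsto_le[OF trivial_limit_at_right_real tendsto_const])
  then show ?thesis unfolding T_def .
qed

lemma sgn_integral_logistic_diff:
  "sgn (\<integral>z. std_gauss z * (logistic (z \<bullet> b - c + s) - logistic (z \<bullet> b - c - s)) \<partial>lborel) = sgn s"
proof (rule sgn_integral_std_gauss[where A = 1 and B = 0])
  show "continuous_on UNIV (\<lambda>z. logistic (z \<bullet> b - c + s) - logistic (z \<bullet> b - c - s))"
    by (intro continuous_intros)
  show "\<bar>logistic (z \<bullet> b - c + s) - logistic (z \<bullet> b - c - s)\<bar> \<le> 1 + 0 * norm z" for z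
    using logistic_pos[of "z \<bullet> b - c + s"] logistic_less_one[of "z \<bullet> b - c + s"]
      logistic_pos[of "z \<bullet> b - c - s"] logistic_less_one[of "z \<bullet> b - c - s"] by auto
  show "sgn (logistic (z \<bullet> b - c + s) - logistic (z \<bullet> b - c - s)) = sgn s" for z
    using sgn_logistic_diff[of "z \<bullet> b - c" s] by simp
qed

section \<open>The population EM quantities\<close>

text \<open>\<open>logistic_pair (a \<bullet> b) (\<theta> \<bullet> b) (z \<bullet> b) = wd (z - \<theta> - a) b + wd (z + \<theta> - a) b\<close> sums the
  weight \<open>wd (Y - a) b\<close> over the two mixture components \<open>Y = z \<mp> \<theta>\<close>, \<open>z\<close> standard Gaussian.\<close>
definition logistic_pair :: "real \<Rightarrow> real \<Rightarrow> real \<Rightarrow> real" where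
  "logistic_pair c s x = logistic (x - c - s) + logistic (x - c + s)"

lemma continuous_on_logistic_pair [continuous_intros]:
  "continuous_on S f \<Longrightarrow> continuous_on S (\<lambda>x. logistic_pair c s (f x))"
  unfolding logistic_pair_def by (intro continuous_intros)

lemma strict_mono_logistic_pair: "strict_mono (logistic_pair c s)"
  by (rule strict_monoI) (simp add: logistic_pair_def add_strict_mono)

lemma logistic_pair_pos: "0 < logistic_pair c s x"
  and logistic_pair_less_two: "logistic_pair c s x < 2"
  unfolding logistic_pair_def
  using logistic_pos[of "x - c - s"] logistic_pos[of "x - c + s"]
    logistic_less_one[of "x - c - s"] logistic_less_one[of "x - c + s"] by linarith+

lemma abs_logistic_pair_le: "\<bar>logistic_pair c s x\<bar> \<le> 2"
  using logistic_pair_pos[of c s x] logistic_pair_less_two[of c s x] by simp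

lemma logistic_pair_minus: "logistic_pair c s (- x) = 2 - logistic_pair (- c) s x"
proof -
  have args: "- x - c - s = - (x + c + s)" "- x - c + s = - (x + c - s)" by simp_all
  show ?thesis unfolding logistic_pair_def args logistic_minus by simp
qed

lemma sgn_logistic_pair_diff: "sgn (logistic_pair (- c) s x - logistic_pair c s x) = sgn c"
proof (cases c "0::real" rule: linorder_cases)
  case less
  then have "logistic_pair (- c) s x < logistic_pair c s x"
    by (simp add: logistic_pair_def add_strict_mono)
  with less show ?thesis by simp
next
  case greater
  then have "logistic_pair c s x < logistic_pair (- c) s x"
    by (simp add: logistic_pair_def add_strict_mono)
  with greater show ?thesis by simp
qed simp

lemma em_p_eq_integral:
  "em_p \<theta> a b = (\<integral>z. std_gauss z * (logistic_pair (a \<bullet> b) (\<theta> \<bullet> b) (z \<bullet> b) / 2) \<partial>lborel)"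
proof -
  have "em_p \<theta> a b = mixE \<theta> (\<lambda>y. logistic ((y - a) \<bullet> b))"
    unfolding em_p_def wd_eq_logistic ..
  also have "\<dots> = (\<integral>z. std_gauss z * ((logistic ((z - \<theta> - a) \<bullet> b) + logistic ((z + \<theta> - a) \<bullet> b)) / 2) \<partial>lborel)"
    by (rule mixE_eq_integral[where A = 1 and B = 0]) (auto intro!: continuous_intros abs_logistic_le)
  also have "\<dots> = (\<integral>z. std_gauss z * (logistic_pair (a \<bullet> b) (\<theta> \<bullet> b) (z \<bullet> b) / 2) \<partial>lborel)"
    by (simp add: logistic_pair_def inner_diff_left inner_add_left algebra_simps)
  finally show ?thesis .
qed

lemma em_p_pos: "0 < em_p \<theta> a b"
proof -
  have "sgn (em_p \<theta> a b) = sgn (1::real)"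
    unfolding em_p_eq_integral
    by (rule sgn_integral_std_gauss[where A = 1 and B = 0])
      (auto intro!: continuous_intros simp: logistic_pair_pos abs_of_pos logistic_pair_less_two less_imp_le)
  then show ?thesis by (simp add: sgn_1_pos)
qed

lemma em_p_less_one: "em_p \<theta> a b < 1"
proof -
  have "sgn (1 - em_p \<theta> a b) = sgn (1::real)"
    unfolding em_p_eq_integral
  proof (subst integral_std_gauss_const_diff[symmetric])
    show "integrable lborel (\<lambda>z. std_gauss z * (logistic_pair (a \<bullet> b) (\<theta> \<bullet> b) (z \<bullet> b) / 2))"
      by (rule integrable_std_gauss_mult[where A = 1 and B = 0])
        (auto intro!: continuous_intros simp: logistic_pair_pos abs_of_pos logistic_pair_less_two less_imp_le)
    show "sgn (\<integral>z. std_gauss z * (1 - logistic_pair (a \<bullet> b) (\<theta> \<bullet> b) (z \<bullet> b) / 2) \<partial>lborel) = sgn 1"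
      using logistic_pair_pos logistic_pair_less_two
      by (intro sgn_integral_std_gauss[where A = 1 and B = 0])
        (auto intro!: continuous_intros simp: abs_le_iff less_imp_le)
  qed
  then show ?thesis by (simp add: sgn_1_pos)
qed

lemma sgn_half_minus_em_p: "sgn (1/2 - em_p \<theta> a b) = sgn (a \<bullet> b)"
proof -
  define L where "L c z = logistic_pair c (\<theta> \<bullet> b) (z \<bullet> b)" for c and z :: 'a
  have L_cont: "continuous_on UNIV (L c)" for c
    unfolding L_def by (intro continuous_intros)
  have L_bounds: "0 < L c z" "L c z < 2" for c z
    unfolding L_def by (rule logistic_pair_pos logistic_pair_less_two)+
  have half_bound: "\<bar>L c z\<bar> \<le> 2" "\<bar>1/2 - L c z / 2\<bar> \<le> 1"
    and diff_bound: "\<bar>(L c' z - L c z) / 4\<bar> \<le> 1" for c c' z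
    using L_bounds[of c z] L_bounds[of c' z] by (auto simp: abs_le_iff)
  have "1/2 - em_p \<theta> a b = (\<integral>z. std_gauss z * (1/2 - L (a \<bullet> b) z / 2) \<partial>lborel)"
    unfolding em_p_eq_integral L_def[symmetric]
    by (intro integral_std_gauss_const_diff[symmetric] integrable_std_gauss_mult[where A = 1 and B = 0])
      (auto intro!: continuous_intros L_cont simp: half_bound)
  also have "\<dots> = (\<integral>z. std_gauss z * ((1/2 - L (a \<bullet> b) z / 2 + (1/2 - L (a \<bullet> b) (- z) / 2)) / 2) \<partial>lborel)"
    by (intro integral_std_gauss_symmetrize[where A = 1 and B = 0])
      (auto intro!: continuous_intros L_cont simp: half_bound)
  also have "\<dots> = (\<integral>z. std_gauss z * ((L (- (a \<bullet> b)) z - L (a \<bullet> b) z) / 4) \<partial>lborel)"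
    by (rule Bochner_Integration.integral_cong[OF refl]) (simp add: L_def logistic_pair_minus field_simps)
  finally have half: "1/2 - em_p \<theta> a b
      = (\<integral>z. std_gauss z * ((L (- (a \<bullet> b)) z - L (a \<bullet> b) z) / 4) \<partial>lborel)" .
  show ?thesis
    unfolding half
  proof (rule sgn_integral_std_gauss[where A = 1 and B = 0])
    show "continuous_on UNIV (\<lambda>z. (L (- (a \<bullet> b)) z - L (a \<bullet> b) z) / 4)"
      by (intro continuous_intros L_cont) simp
    show "\<bar>(L (- (a \<bullet> b)) z - L (a \<bullet> b) z) / 4\<bar> \<le> 1 + 0 * norm z" for z
      using diff_bound by simp
    show "sgn ((L (- (a \<bullet> b)) z - L (a \<bullet> b) z) / 4) = sgn (a \<bullet> b)" for z
      unfolding L_def by (simp add: sgn_logistic_pair_diff sgn_divide)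
  qed
qed

lemma em_q_inner: "em_q \<theta> a b \<bullet> v = mixE \<theta> (\<lambda>y. wd (y - a) b * (y \<bullet> v))"
proof -
  have cont: "continuous_on UNIV (\<lambda>x. wd (x - a) b *\<^sub>R x)"
    unfolding wd_eq_logistic by (intro continuous_intros)
  have bound: "norm (wd (x - a) b *\<^sub>R x) \<le> 0 + 1 * norm x" for x
    unfolding wd_eq_logistic using logistic_pos logistic_less_one
    by (simp add: abs_of_pos mult_left_le_one_le less_imp_le)
  show ?thesis
    unfolding em_q_def mixE_def inner_add_left inner_scaleR_left
    using integrable_std_gauss_translate_scaleR[OF cont bound, of \<theta>]
      integrable_std_gauss_translate_scaleR[OF cont bound, of "- \<theta>"]
    by (simp add: integral_inner_left[symmetric] mult.assoc)
qed

lemma em_q_inner_eq: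
  "em_q \<theta> a b \<bullet> v =
     (\<integral>z. std_gauss z * ((z \<bullet> v) * logistic_pair (a \<bullet> b) (\<theta> \<bullet> b) (z \<bullet> b)) \<partial>lborel) / 2
   + (\<theta> \<bullet> v) * (\<integral>z. std_gauss z * (logistic (z \<bullet> b - a \<bullet> b + \<theta> \<bullet> b)
                                     - logistic (z \<bullet> b - a \<bullet> b - \<theta> \<bullet> b)) \<partial>lborel) / 2"
proof -
  define c s where "c = a \<bullet> b" and "s = \<theta> \<bullet> b"
  define X where "X z = (z \<bullet> v) * logistic_pair c s (z \<bullet> b)" for z
  define Y where "Y z = logistic (z \<bullet> b - c + s) - logistic (z \<bullet> b - c - s)" for z
  have int_X: "integrable lborel (\<lambda>z. std_gauss z * X z)"
    unfolding X_def using abs_inner_mult_le[OF abs_logistic_pair_le]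
    by (intro integrable_std_gauss_mult[where A = 0 and B = "norm v * 2"]) (auto intro!: continuous_intros)
  have "\<bar>Y z\<bar> \<le> 1 + 0 * norm z" for z
    unfolding Y_def abs_le_iff
    using logistic_pos[of "z \<bullet> b - c + s"] logistic_less_one[of "z \<bullet> b - c + s"]
      logistic_pos[of "z \<bullet> b - c - s"] logistic_less_one[of "z \<bullet> b - c - s"] by auto
  then have int_Y: "integrable lborel (\<lambda>z. std_gauss z * Y z)"
    by (rule integrable_std_gauss_mult[rotated]) (auto intro!: continuous_intros simp: Y_def)
  have "em_q \<theta> a b \<bullet> v = (\<integral>z. std_gauss z
      * ((logistic ((z - \<theta> - a) \<bullet> b) * ((z - \<theta>) \<bullet> v) + logistic ((z + \<theta> - a) \<bullet> b) * ((z + \<theta>) \<bullet> v)) / 2) \<partial>lborel)"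
  proof (unfold em_q_inner wd_eq_logistic, rule mixE_eq_integral)
    show "continuous_on UNIV (\<lambda>y. logistic ((y - a) \<bullet> b) * (y \<bullet> v))"
      by (intro continuous_intros)
    show "\<bar>logistic ((y - a) \<bullet> b) * (y \<bullet> v)\<bar> \<le> 0 + norm v * norm y" for y
      using abs_inner_mult_le[OF abs_logistic_le[of "(y - a) \<bullet> b"], of y v] by (simp add: ac_simps)
  qed
  also have "\<dots> = (\<integral>z. (std_gauss z * X z) / 2 + (\<theta> \<bullet> v) * (std_gauss z * Y z) / 2 \<partial>lborel)"
  proof (rule Bochner_Integration.integral_cong[OF refl])
    fix z :: 'a
    have args: "(z - \<theta> - a) \<bullet> b = z \<bullet> b - c - s" "(z + \<theta> - a) \<bullet> b = z \<bullet> b - c + s"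
      "(z - \<theta>) \<bullet> v = z \<bullet> v - \<theta> \<bullet> v" "(z + \<theta>) \<bullet> v = z \<bullet> v + \<theta> \<bullet> v"
      by (simp_all add: c_def s_def inner_diff_left inner_add_left)
    show "std_gauss z * ((logistic ((z - \<theta> - a) \<bullet> b) * ((z - \<theta>) \<bullet> v)
        + logistic ((z + \<theta> - a) \<bullet> b) * ((z + \<theta>) \<bullet> v)) / 2)
      = std_gauss z * X z / 2 + (\<theta> \<bullet> v) * (std_gauss z * Y z) / 2"
      unfolding args X_def Y_def logistic_pair_def by (simp add: field_simps)
  qed
  also have "\<dots> = (\<integral>z. std_gauss z * X z \<partial>lborel) / 2 + (\<theta> \<bullet> v) * (\<integral>z. std_gauss z * Y z \<partial>lborel) / 2"
    using int_X int_Y by simp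
  finally show ?thesis unfolding X_def Y_def c_def s_def .
qed

lemma em_q_inner_self_pos:
  assumes "b \<noteq> 0"
  shows "0 < em_q \<theta> a b \<bullet> b"
proof -
  define T1 where "T1 = (\<integral>z. std_gauss z * ((z \<bullet> b) * logistic_pair (a \<bullet> b) (\<theta> \<bullet> b) (z \<bullet> b)) \<partial>lborel)"
  define T2 where "T2 = (\<integral>z. std_gauss z * (logistic (z \<bullet> b - a \<bullet> b + \<theta> \<bullet> b)
                                     - logistic (z \<bullet> b - a \<bullet> b - \<theta> \<bullet> b)) \<partial>lborel)"
  have "0 < T1"
    unfolding T1_def using abs_logistic_pair_le assms
    by (intro integral_inner_strict_mono_pos strict_mono_logistic_pair)
      (auto intro!: continuous_intros)
  moreover have "0 \<le> (\<theta> \<bullet> b) * T2"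
    using sgn_integral_logistic_diff[of b "a \<bullet> b" "\<theta> \<bullet> b"] unfolding T2_def[symmetric]
    by (cases "\<theta> \<bullet> b" "0::real" rule: linorder_cases)
      (auto simp: sgn_if split: if_splits intro: mult_nonpos_nonpos)
  ultimately show ?thesis
    unfolding em_q_inner_eq T1_def[symmetric] T2_def[symmetric] by simp
qed

lemma sgn_em_q_inner:
  "sgn (em_q \<theta> a b \<bullet> \<theta>) = sgn (b \<bullet> \<theta>)"
proof -
  define G where "G = logistic_pair (a \<bullet> b) (\<theta> \<bullet> b)"
  define T1 where "T1 = (\<integral>z. std_gauss z * ((z \<bullet> \<theta>) * G (z \<bullet> b)) \<partial>lborel)"
  define T2 where "T2 = (\<integral>z. std_gauss z * (logistic (z \<bullet> b - a \<bullet> b + \<theta> \<bullet> b)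
                                     - logistic (z \<bullet> b - a \<bullet> b - \<theta> \<bullet> b)) \<partial>lborel)"
  have q: "em_q \<theta> a b \<bullet> \<theta> = T1 / 2 + (\<theta> \<bullet> \<theta>) * T2 / 2"
    unfolding em_q_inner_eq T1_def T2_def G_def ..
  have sgn_T2: "sgn T2 = sgn (b \<bullet> \<theta>)"
    unfolding T2_def by (simp add: sgn_integral_logistic_diff inner_commute)
  have G: "continuous_on UNIV G" "mono G" "0 \<le> G x" "G x \<le> 2" for x
    unfolding G_def using logistic_pair_pos logistic_pair_less_two
    by (auto intro!: continuous_intros strict_mono_mono strict_mono_logistic_pair less_imp_le)
  have T1_nonneg: "0 \<le> T1" if "0 \<le> b \<bullet> \<theta>"
    unfolding T1_def using G that by (rule integral_inner_mono_nonneg)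
  have T1_nonpos: "T1 \<le> 0" if "b \<bullet> \<theta> \<le> 0"
    using integral_inner_mono_nonneg[OF G, of b "- \<theta>"] that unfolding T1_def by simp
  consider "0 < b \<bullet> \<theta>" | "b \<bullet> \<theta> < 0" | "b \<bullet> \<theta> = 0" by linarith
  then show ?thesis
  proof cases
    case 1
    then have "\<theta> \<noteq> 0" by auto
    with 1 sgn_T2 T1_nonneg show ?thesis
      unfolding q by (simp add: sgn_1_pos add_nonneg_pos)
  next
    case 2
    then have "\<theta> \<noteq> 0" by auto
    with 2 sgn_T2 T1_nonpos show ?thesis
      unfolding q by (simp add: sgn_1_neg add_nonpos_neg mult_pos_neg)
  next
    case 3
    with sgn_T2 T1_nonneg T1_nonpos show ?thesis
      unfolding q by (simp add: sgn_0_0)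
  qed
qed

lemma em_update_signs:
  fixes \<theta> a b :: "'a::euclidean_space"
  defines "p \<equiv> em_p \<theta> a b" and "q \<equiv> em_q \<theta> a b"
  shows "sgn ((((1 - 2 * p) / (2 * p * (1 - p))) *\<^sub>R q) \<bullet> ((1 / (2 * p * (1 - p))) *\<^sub>R q))
           = sgn (1/2 - p)"
    and "sgn (((1 / (2 * p * (1 - p))) *\<^sub>R q) \<bullet> \<theta>) = sgn (b \<bullet> \<theta>)"
proof -
  define D where "D = 2 * p * (1 - p)"
  have D_pos: "0 < D"
    using em_p_pos[of \<theta> a b] em_p_less_one[of \<theta> a b] unfolding D_def p_def by simp
  define K where "K = 2 * (q \<bullet> q) / D\<^sup>2"
  have inner: "(((1 - 2 * p) / D) *\<^sub>R q) \<bullet> ((1 / D) *\<^sub>R q) = (1/2 - p) * K"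
    using D_pos by (simp add: K_def field_simps power2_eq_square)
  have "1/2 - p = 0 \<or> 0 < K"
  proof (cases "b = 0")
    case True
    then show ?thesis using sgn_half_minus_em_p[of \<theta> a b] by (simp add: p_def sgn_0_0)
  next
    case False
    then have "q \<noteq> 0" using em_q_inner_self_pos[of b \<theta> a] by (auto simp: q_def)
    with D_pos show ?thesis by (simp add: K_def)
  qed
  then show "sgn ((((1 - 2 * p) / D) *\<^sub>R q) \<bullet> ((1 / D) *\<^sub>R q)) = sgn (1/2 - p)"
    unfolding inner
  proof
    assume "1/2 - p = 0"
    then show "sgn ((1/2 - p) * K) = sgn (1/2 - p)" by (simp only: mult_zero_left)
  qed (simp add: sgn_mult)
  show "sgn (((1 / D) *\<^sub>R q) \<bullet> \<theta>) = sgn (b \<bullet> \<theta>)"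
    using D_pos sgn_em_q_inner[of \<theta> a b] by (simp add: q_def sgn_mult)
qed

theorem lemma4:
  fixes theta :: "'a::euclidean_space"
    and a b q :: "nat \<Rightarrow> 'a" and p :: "nat \<Rightarrow> real"
  assumes q_def: "\<And>t. q (Suc t) = em_q theta (a t) (b t)"
    and p_def: "\<And>t. p (Suc t) = em_p theta (a t) (b t)"
    and a_def: "\<And>t. a (Suc t) = ((1 - 2 * p (Suc t)) / (2 * p (Suc t) * (1 - p (Suc t)))) *\<^sub>R q (Suc t)"
    and b_def: "\<And>t. b (Suc t) = (1 / (2 * p (Suc t) * (1 - p (Suc t)))) *\<^sub>R q (Suc t)"
  shows "\<forall>t. sgn (a t \<bullet> b t) = sgn (a (Suc t) \<bullet> b (Suc t))
           \<and> sgn (a (Suc t) \<bullet> b (Suc t)) = sgn (1/2 - p (Suc t))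
           \<and> sgn (b t \<bullet> theta) = sgn (b (Suc t) \<bullet> theta)"
proof
  fix t
  have "sgn (a (Suc t) \<bullet> b (Suc t)) = sgn (1/2 - p (Suc t))"
    unfolding a_def b_def q_def p_def by (rule em_update_signs(1))
  moreover have "sgn (1/2 - p (Suc t)) = sgn (a t \<bullet> b t)"
    unfolding p_def by (rule sgn_half_minus_em_p)
  moreover have "sgn (b (Suc t) \<bullet> theta) = sgn (b t \<bullet> theta)"
    unfolding b_def q_def p_def by (rule em_update_signs(2))
  ultimately show "sgn (a t \<bullet> b t) = sgn (a (Suc t) \<bullet> b (Suc t))
           \<and> sgn (a (Suc t) \<bullet> b (Suc t)) = sgn (1/2 - p (Suc t))
           \<and> sgn (b t \<bullet> theta) = sgn (b (Suc t) \<bullet> theta)"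
    by simp
qed

end
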